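(* Let $\mathbf P=(P,\leq,{}',0,1)$ be an atomic pseudo-orthomodular poset. Then every element of $\mathbf P$ is the join (in $\mathbf P$) of an orthogonal set of atoms lying under it, and $\mathbf P$ is atomistic.
   Context: For $M\subseteq P$, $U(M)$, $L(M)$ are the sets of upper and lower bounds; $U(a,b)=U(\{a,b\})$ etc. A poset with complementation is a bounded poset with antitone involution $'$ ($x\le y\Rightarrow y'\le x'$, $x''=x$) with $L(x,x')=\{0\}$, $U(x,x')=\{1\}$; it is pseudo-orthomodular if $L(U(L(x,y),y'),y)=L(x,y)$ for all $x,y$. A subset $S$ is orthogonal if $s\le t'$ for all distinct $s,t\in S$. An atom is a minimal element of $P\setminus\{0\}$; $\mathbf P$ is atomic if every $b>0$ lies above some atom, and atomistic if every element is the join of a set of atoms. *)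

theory Defs
  imports Main
begin

text \<open>The poset P is the carrier type 'a with its order; 0 = bot, 1 = top.\<close>

definition ub_set :: "'a::order set \<Rightarrow> 'a set" ("U") where
  "U M = {x. \<forall>m\<in>M. m \<le> x}"

definition lb_set :: "'a::order set \<Rightarrow> 'a set" ("L") where
  "L M = {x. \<forall>m\<in>M. x \<le> m}"

definition poset_with_complementation :: "('a::{order_bot,order_top} \<Rightarrow> 'a) \<Rightarrow> bool" where
  "poset_with_complementation c \<longleftrightarrow>
     (\<forall>x y. x \<le> y \<longrightarrow> c y \<le> c x) \<and> (\<forall>x. c (c x) = x) \<and>
     (\<forall>x. L {x, c x} = {bot}) \<and> (\<forall>x. U {x, c x} = {top})"

definition pseudo_orthomodular :: "('a::{order_bot,order_top} \<Rightarrow> 'a) \<Rightarrow> bool" where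
  "pseudo_orthomodular c \<longleftrightarrow>
     poset_with_complementation c \<and>
     (\<forall>x y. L (U (L {x, y} \<union> {c y}) \<union> {y}) = L {x, y})"

definition is_join :: "'a::order set \<Rightarrow> 'a \<Rightarrow> bool" where
  "is_join S a \<longleftrightarrow> a \<in> U S \<and> (\<forall>u\<in>U S. a \<le> u)"

definition orthogonal :: "('a::order \<Rightarrow> 'a) \<Rightarrow> 'a set \<Rightarrow> bool" where
  "orthogonal c S \<longleftrightarrow> (\<forall>s\<in>S. \<forall>t\<in>S. s \<noteq> t \<longrightarrow> s \<le> c t)"

definition atom :: "'a::order_bot \<Rightarrow> bool" where
  "atom a \<longleftrightarrow> a \<noteq> bot \<and> \<not> (\<exists>x. x \<noteq> bot \<and> x < a)"

definition atomic :: "'a::order_bot itself \<Rightarrow> bool" where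
  "atomic _ \<longleftrightarrow> (\<forall>b::'a. bot < b \<longrightarrow> (\<exists>a. atom a \<and> a \<le> b))"

definition atomistic :: "'a::order_bot itself \<Rightarrow> bool" where
  "atomistic _ \<longleftrightarrow> (\<forall>x::'a. \<exists>A. (\<forall>a\<in>A. atom a) \<and> is_join A x)"

end

theory Submission
  imports Defs
begin

text \<open>
  Fix x and take, by Zorn's lemma, a maximal orthogonal set A of atoms below x. Let u be an
  upper bound of A and v an upper bound of L(u, x) together with x'. If v were not 1, then
  v' \<noteq> 0 would lie above an atom b; from x' \<le> v we get b \<le> v' \<le> x, and from A \<subseteq> L(u, x)
  we get b \<le> a' for all a \<in> A, so A \<union> {b} would contradict maximality. Hence
  U(L(u, x), x') = {1}, and pseudo-orthomodularity turns L(U(L(u, x), x'), x) = L(x) into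
  L(u, x) = L(x), i.e. x \<le> u.
\<close>

lemma compl_antitone:
  assumes "poset_with_complementation c" and "x \<le> y"
  shows "c y \<le> c x"
  using assms unfolding poset_with_complementation_def by blast

lemma compl_compl:
  assumes "poset_with_complementation c"
  shows "c (c x) = x"
  using assms unfolding poset_with_complementation_def by blast

lemma compl_bot:
  assumes "poset_with_complementation c"
  shows "c bot = top"
proof -
  have "c bot \<in> U {bot, c bot}"
    unfolding ub_set_def by auto
  with assms show ?thesis
    unfolding poset_with_complementation_def by auto
qed

lemma le_and_le_compl_imp_bot:
  assumes "poset_with_complementation c" and "b \<le> v" and "b \<le> c v"
  shows "b = bot"
proof -
  from assms(2,3) have "b \<in> L {v, c v}"
    unfolding lb_set_def by auto
  with assms(1) show ?thesis
    unfolding poset_with_complementation_def by auto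
qed

lemma pseudo_orthomodular_imp_complementation:
  "pseudo_orthomodular c \<Longrightarrow> poset_with_complementation c"
  unfolding pseudo_orthomodular_def by blast

lemma top_in_ub_set: "top \<in> U (M::'a::order_top set)"
  unfolding ub_set_def by auto

lemma pseudo_orthomodular_le:
  assumes "pseudo_orthomodular c" and "U (L {y, x} \<union> {c x}) = {top}"
  shows "x \<le> y"
proof -
  have "x \<in> L (U (L {y, x} \<union> {c x}) \<union> {x})"
    using assms(2) unfolding lb_set_def by auto
  also have "L (U (L {y, x} \<union> {c x}) \<union> {x}) = L {y, x}"
    using assms(1) unfolding pseudo_orthomodular_def by blast
  finally show ?thesis
    unfolding lb_set_def by auto
qed

lemma atomicD:
  assumes "atomic TYPE('a::order_bot)" and "(b::'a) \<noteq> bot"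
  shows "\<exists>a. atom a \<and> a \<le> b"
  using assms unfolding atomic_def by (simp add: bot.not_eq_extremum)

lemma atom_ne_bot: "atom a \<Longrightarrow> a \<noteq> bot"
  unfolding atom_def by blast

lemma orthogonal_insert:
  assumes "poset_with_complementation c" and "orthogonal c A" and "\<forall>a\<in>A. b \<le> c a"
  shows "orthogonal c (insert b A)"
proof -
  have "a \<le> c b" if "a \<in> A" for a
    using compl_antitone[OF assms(1), of b "c a"] assms(3) that compl_compl[OF assms(1)] by simp
  with assms(2,3) show ?thesis
    unfolding orthogonal_def by blast
qed

lemma obtain_maximal_orthogonal_subset:
  obtains A where "A \<subseteq> X" and "orthogonal c A"
    and "\<And>B. A \<subseteq> B \<Longrightarrow> B \<subseteq> X \<Longrightarrow> orthogonal c B \<Longrightarrow> B = A"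
proof -
  have "\<exists>A\<in>{A. A \<subseteq> X \<and> orthogonal c A}. \<forall>B\<in>{A. A \<subseteq> X \<and> orthogonal c A}. A \<subseteq> B \<longrightarrow> B = A"
  proof (rule subset_Zorn')
    fix C assume "subset.chain {A. A \<subseteq> X \<and> orthogonal c A} C"
    then have C_sub: "C \<subseteq> {A. A \<subseteq> X \<and> orthogonal c A}"
      and comparable: "\<And>S T. S \<in> C \<Longrightarrow> T \<in> C \<Longrightarrow> S \<subseteq> T \<or> T \<subseteq> S"
      by (auto simp: subset_chain_def)
    have "orthogonal c (\<Union>C)"
      unfolding orthogonal_def
    proof (intro ballI impI)
      fix s t assume "s \<in> \<Union>C" "t \<in> \<Union>C" "s \<noteq> t"
      then obtain S T where ST: "S \<in> C" "T \<in> C" "s \<in> S" "t \<in> T"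
        by blast
      then obtain Z where "Z \<in> C" "s \<in> Z" "t \<in> Z"
        using comparable[OF ST(1,2)] by blast
      with C_sub \<open>s \<noteq> t\<close> show "s \<le> c t"
        unfolding orthogonal_def by blast
    qed
    with C_sub show "\<Union>C \<in> {A. A \<subseteq> X \<and> orthogonal c A}"
      by blast
  qed
  then obtain A where "A \<in> {A. A \<subseteq> X \<and> orthogonal c A}"
    and "\<forall>B\<in>{A. A \<subseteq> X \<and> orthogonal c A}. A \<subseteq> B \<longrightarrow> B = A" ..
  then show thesis
    by (intro that[of A]) auto
qed

lemma orthogonal_atoms_extend:
  fixes c :: "'a::{order_bot,order_top} \<Rightarrow> 'a"
  assumes pc: "poset_with_complementation c" and "atomic TYPE('a)"
    and "orthogonal c A" and A_le: "\<forall>a\<in>A. a \<le> v" and "c x \<le> v" and "v \<noteq> top"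
  shows "\<exists>b. atom b \<and> b \<le> x \<and> b \<notin> A \<and> orthogonal c (insert b A)"
proof -
  have "c v \<noteq> bot"
    using \<open>v \<noteq> top\<close> compl_compl[OF pc, of v] compl_bot[OF pc] by force
  then obtain b where b: "atom b" "b \<le> c v"
    using atomicD[OF \<open>atomic TYPE('a)\<close>] by blast
  have "b \<le> x"
    using b(2) compl_antitone[OF pc \<open>c x \<le> v\<close>] compl_compl[OF pc, of x] by simp
  moreover have "b \<le> c a" if "a \<in> A" for a
    using b(2) compl_antitone[OF pc] A_le that by (blast intro: order_trans)
  moreover have "b \<notin> A"
    using A_le b le_and_le_compl_imp_bot[OF pc] atom_ne_bot by blast
  ultimately show ?thesis
    using b(1) orthogonal_insert[OF pc \<open>orthogonal c A\<close>] by blast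
qed

lemma is_join_maximal_orthogonal_atoms:
  fixes c :: "'a::{order_bot,order_top} \<Rightarrow> 'a"
  assumes pom: "pseudo_orthomodular c" and at: "atomic TYPE('a)"
    and A_atoms: "A \<subseteq> {a. atom a \<and> a \<le> x}" and "orthogonal c A"
    and maximal: "\<And>B. A \<subseteq> B \<Longrightarrow> B \<subseteq> {a. atom a \<and> a \<le> x} \<Longrightarrow> orthogonal c B \<Longrightarrow> B = A"
  shows "is_join A x"
  unfolding is_join_def
proof (intro conjI ballI)
  show "x \<in> U A"
    using A_atoms unfolding ub_set_def by auto
next
  fix u assume "u \<in> U A"
  have "v = top" if v: "v \<in> U (L {u, x} \<union> {c x})" for v
  proof (rule ccontr)
    assume "v \<noteq> top"
    have "A \<subseteq> L {u, x}"
      using \<open>u \<in> U A\<close> A_atoms unfolding ub_set_def lb_set_def by auto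
    with v have "\<forall>a\<in>A. a \<le> v" and "c x \<le> v"
      unfolding ub_set_def by auto
    then obtain b where "atom b" "b \<le> x" "b \<notin> A" "orthogonal c (insert b A)"
      using orthogonal_atoms_extend[OF pseudo_orthomodular_imp_complementation[OF pom] at
          \<open>orthogonal c A\<close> _ _ \<open>v \<noteq> top\<close>] by blast
    with A_atoms maximal[of "insert b A"] show False
      by blast
  qed
  then have "U (L {u, x} \<union> {c x}) = {top}"
    using top_in_ub_set by blast
  then show "x \<le> u"
    using pseudo_orthomodular_le[OF pom] by blast
qed

lemma ex_orthogonal_atoms_is_join:
  fixes c :: "'a::{order_bot,order_top} \<Rightarrow> 'a"
  assumes "pseudo_orthomodular c" and "atomic TYPE('a)"
  shows "\<exists>A. (\<forall>a\<in>A. atom a \<and> a \<le> x) \<and> orthogonal c A \<and> is_join A x"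
proof (rule obtain_maximal_orthogonal_subset[of "{a. atom a \<and> a \<le> x}" c])
  fix A
  assume atoms: "A \<subseteq> {a. atom a \<and> a \<le> x}" and "orthogonal c A"
    and "\<And>B. A \<subseteq> B \<Longrightarrow> B \<subseteq> {a. atom a \<and> a \<le> x} \<Longrightarrow> orthogonal c B \<Longrightarrow> B = A"
  then have "is_join A x"
    by (rule is_join_maximal_orthogonal_atoms[OF assms])
  with atoms \<open>orthogonal c A\<close> show ?thesis
    by auto
qed

theorem proposition5:
  fixes c :: "'a::{order_bot,order_top} \<Rightarrow> 'a"
  assumes "poset_with_complementation c"
    and "pseudo_orthomodular c"
    and "atomic TYPE('a)"
  shows "(\<forall>x::'a. \<exists>A. (\<forall>a\<in>A. atom a \<and> a \<le> x) \<and> orthogonal c A \<and> is_join A x)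
         \<and> atomistic TYPE('a)"
proof -
  \<comment> \<open>The first hypothesis is already contained in pseudo-orthomodularity.\<close>
  have orthogonal_join: "\<exists>A. (\<forall>a\<in>A. atom a \<and> a \<le> x) \<and> orthogonal c A \<and> is_join A x"
    for x :: 'a
    using ex_orthogonal_atoms_is_join[OF assms(2,3)] .
  have "atomistic TYPE('a)"
    unfolding atomistic_def
  proof
    fix x :: 'a
    obtain A where "\<forall>a\<in>A. atom a \<and> a \<le> x" and "is_join A x"
      using orthogonal_join by blast
    then show "\<exists>A. (\<forall>a\<in>A. atom a) \<and> is_join A x"
      by auto
  qed
  with orthogonal_join show ?thesis
    by simp
qed

end
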